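(* Let $x=(x_1,\dots,x_n)$ be a stochastic vector ($x_j\ge0$, $\sum_j x_j=1$) and let $P(x)=\prod_{k=1}^n(1-x_k)^{1-x_k}$. Then (i) $\max_j x_j/P(x)\le e^{1/e}$; (ii) $\sum_{j=1}^n\psi_a\!\Big(\dfrac{x_j}{2\,P(x)}\Big)\le 1$, where $\psi_a(t)=1-(1-t)a^t$ and $a$ is the unique positive root of $\frac{1-\ln a}{a}=\frac1e$.
   Context: Convention: $0^0=1$. *)

theory Defs
  imports Complex_Main
begin

text \<open>Real power with the convention 0^0 = 1 (Isabelle's powr has 0 powr 0 = 0).\<close>
definition pow0 :: "real \<Rightarrow> real \<Rightarrow> real" where
  "pow0 b e = (if b = 0 then (if e = 0 then 1 else 0) else b powr e)"

definition Pfun :: "nat \<Rightarrow> (nat \<Rightarrow> real) \<Rightarrow> real" where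
  "Pfun n x = (\<Prod>k\<in>{1..n}. pow0 (1 - x k) (1 - x k))"

definition psi :: "real \<Rightarrow> real \<Rightarrow> real" where
  "psi a t = 1 - (1 - t) * a powr t"

end

theory Submission
  imports Defs "HOL-Analysis.Analysis"
begin

(* Let m = max x_j and y = 1 - m.  Every factor of P(x) other than the
   maximal one satisfies (1 - t)^(1 - t) >= exp (-t), and these t sum to y, so
       P(x) >= Pbound m := y^y * exp (-y).
   (i)  Since m <= exp (-y) and y^y >= exp (-1/e), we get m / P(x) <= e^(1/e).
   (ii) For y in [0,1] one has y ln y >= (y^2 - 1)/2, whence Pbound m >= (1 + m^2/2)/e,
        and with e < 68/25 this gives m <= 2 P(x) tau m for tau m = (68/25) m / (2 + m^2).
        All arguments t_j = x_j / (2 P(x)) therefore lie in [0, tau m].  The root a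
        satisfies 21/50 <= ln a < 1, which makes psi_a convex on [0,1] with psi_a 0 = 0,
        so psi_a t_j <= t_j / tau m * psi_a (tau m); summing, the sum is at most
        psi_a (tau m) / (2 P(x) tau m), and psi_a (tau m) <= m follows from a quadratic
        lower bound on a^t and a polynomial inequality in m, certified by Bernstein
        coefficients on [0,1/2] and [1/2,1]. *)

text \<open>The defining equation of \<open>a\<close> reads \<open>1 - ln a = exp (ln a - 1)\<close>; this pins
  \<open>ln a\<close> into \<open>[21/50, 1)\<close>, which is all the proof uses about \<open>a\<close>.\<close>

lemma root_ln_bounds:
  fixes a :: real
  assumes a_pos: "a > 0" and a_root: "(1 - ln a) / a = 1 / exp 1"
  shows "21/50 \<le> ln a" and "ln a < 1"
proof -
  have root: "1 - ln a = exp (ln a - 1)"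
    using a_root a_pos by (simp add: field_simps exp_diff)
  then show "ln a < 1"
    by (metis diff_gt_0_iff_gt exp_gt_zero)
  show "21/50 \<le> ln a"
  proof (rule ccontr)
    assume small: "\<not> 21/50 \<le> ln a"
    then have "exp (ln a - 1) < exp (- (29/50))" by simp
    also have "exp (- (29/50)) \<le> (29/50 :: real)"
    proof -
      have "(50/29 :: real) \<le> 1 + 29/50 + (29/50)\<^sup>2/2" by (simp add: power2_eq_square)
      also have "\<dots> \<le> exp (29/50 :: real)" by (rule exp_lower_Taylor_quadratic) simp
      finally show ?thesis by (simp add: exp_minus field_simps)
    qed
    finally show False using root small by linarith
  qed
qed

lemma pow0_self: "0 < y \<Longrightarrow> pow0 y y = exp (y * ln y)"
  by (simp add: pow0_def powr_def mult.commute)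

lemma pow0_self_pos: "0 \<le> y \<Longrightarrow> 0 < pow0 y y"
  by (auto simp: pow0_def)

lemma exp_le_pow0_self:
  fixes y b :: real
  assumes "0 \<le> y" "b \<le> 0" "0 < y \<Longrightarrow> b \<le> y * ln y"
  shows "exp b \<le> pow0 y y"
proof (cases "y = 0")
  case True
  then show ?thesis using assms(2) by (simp add: pow0_def)
next
  case False
  then show ?thesis using assms by (simp add: pow0_self)
qed

lemma xlnx_ge_sub_one: "0 < (y::real) \<Longrightarrow> y - 1 \<le> y * ln y"
proof -
  assume pos: "0 < y"
  have "- ln y \<le> 1/y - 1" using ln_le_minus_one[of "1/y"] pos by (simp add: ln_div)
  then have "y * (- ln y) \<le> y * (1/y - 1)" using pos by (intro mult_left_mono) auto
  then show ?thesis using pos by (simp add: algebra_simps)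
qed

lemma xlnx_ge_neg_inv_e: "0 < (y::real) \<Longrightarrow> - 1 / exp 1 \<le> y * ln y"
proof -
  assume pos: "0 < y"
  have "- ln y - 1 \<le> (1/y) / exp 1 - 1"
    using ln_le_minus_one[of "(1/y) / exp 1"] pos by (simp add: ln_div ln_mult)
  then have "y * (- ln y) \<le> y * ((1/y) / exp 1)" using pos by (intro mult_left_mono) auto
  then show ?thesis using pos by simp
qed

text \<open>On \<open>(0,1]\<close>, \<open>ln y - (y - 1/y)/2\<close> is nonincreasing and vanishes at \<open>1\<close>.\<close>

lemma ln_ge_half_diff_inverse:
  fixes y :: real assumes "0 < y" "y \<le> 1" shows "(y - 1/y) / 2 \<le> ln y"
proof -
  define g where "g x = ln x - (x - 1/x)/2" for x :: real
  have "g 1 \<le> g y"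
  proof (rule DERIV_nonpos_imp_nonincreasing[OF assms(2)])
    fix x :: real assume x: "y \<le> x" "x \<le> 1"
    then have xp: "x > 0" using assms by simp
    have "DERIV g x :> 1/x - (1 + 1/x^2)/2" unfolding g_def using xp
      by (auto intro!: derivative_eq_intros simp: power2_eq_square field_simps)
    moreover have "1/x - (1 + 1/x^2)/2 = - ((x - 1)^2 / (2*x^2))" using xp
      by (simp add: field_simps power2_eq_square)
    ultimately show "\<exists>d. DERIV g x :> d \<and> d \<le> 0" by fastforce
  qed
  then show ?thesis by (simp add: g_def)
qed

lemma xlnx_ge_half_sq:
  fixes y :: real assumes "0 < y" "y \<le> 1" shows "(y\<^sup>2 - 1) / 2 \<le> y * ln y"
proof -
  have "y * ((y - 1/y)/2) \<le> y * ln y"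
    using ln_ge_half_diff_inverse[OF assms] assms by (intro mult_left_mono) auto
  moreover have "y * ((y - 1/y)/2) = (y\<^sup>2 - 1) / 2"
    using assms by (simp add: field_simps power2_eq_square)
  ultimately show ?thesis by simp
qed

text \<open>The corresponding bounds on self-powers: the first controls the non-maximal factors of
  \<open>P(x)\<close>, the second gives the constant \<open>e\<^sup>1\<^sup>/\<^sup>e\<close> of part (i).\<close>

lemma exp_neg_le_pow0:
  fixes t :: real assumes "0 \<le> t" "t \<le> 1" shows "exp (- t) \<le> pow0 (1 - t) (1 - t)"
  using exp_le_pow0_self[of "1 - t" "- t"] xlnx_ge_sub_one[of "1 - t"] assms by simp

lemma exp_neg_inv_e_le_pow0:
  fixes y :: real assumes "0 \<le> y" shows "exp (- 1 / exp 1) \<le> pow0 y y"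
  using exp_le_pow0_self[of y "- 1 / exp 1"] xlnx_ge_neg_inv_e[of y] assms by simp

text \<open>The lower bound for \<open>P(x)\<close> in terms of the largest coordinate \<open>m\<close>.\<close>

definition Pbound :: "real \<Rightarrow> real" where
  "Pbound m = pow0 (1 - m) (1 - m) * exp (- (1 - m))"

lemma Pbound_pos: "m \<le> 1 \<Longrightarrow> 0 < Pbound m"
  by (simp add: Pbound_def pow0_self_pos)

lemma stochastic_le_one:
  fixes x :: "'i \<Rightarrow> real"
  assumes "finite S" "\<forall>j\<in>S. 0 \<le> x j" "(\<Sum>j\<in>S. x j) = 1" "k \<in> S"
  shows "x k \<le> 1"
  using member_le_sum[of k S x] assms by auto

text \<open>For any coordinate \<open>j\<close> of a stochastic vector, the product of \<open>(1-x\<^sub>k)\<^bsup>1-x\<^sub>k\<^esup>\<close> is at least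
  \<open>Pbound (x j)\<close>: the other factors contribute at least \<open>exp (-(1 - x j))\<close>.\<close>

lemma Pbound_le_prod:
  fixes x :: "'i \<Rightarrow> real"
  assumes fin: "finite S" and nonneg: "\<forall>j\<in>S. 0 \<le> x j"
    and stoch: "(\<Sum>j\<in>S. x j) = 1" and j: "j \<in> S"
  shows "Pbound (x j) \<le> (\<Prod>k\<in>S. pow0 (1 - x k) (1 - x k))"
proof -
  have rest_sum: "(\<Sum>k\<in>S - {j}. x k) = 1 - x j"
    using stoch fin j by (simp add: sum.remove)
  have "exp (- (1 - x j)) = (\<Prod>k\<in>S - {j}. exp (- x k))"
    using fin by (simp add: exp_sum[symmetric] sum_negf rest_sum)
  also have "\<dots> \<le> (\<Prod>k\<in>S - {j}. pow0 (1 - x k) (1 - x k))"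
    using nonneg stochastic_le_one[OF fin nonneg stoch]
    by (intro prod_mono) (auto intro: exp_neg_le_pow0)
  finally have rest: "exp (- (1 - x j)) \<le> (\<Prod>k\<in>S - {j}. pow0 (1 - x k) (1 - x k))" .
  have "Pbound (x j) \<le> pow0 (1 - x j) (1 - x j) * (\<Prod>k\<in>S - {j}. pow0 (1 - x k) (1 - x k))"
    unfolding Pbound_def using rest stochastic_le_one[OF fin nonneg stoch j]
    using pow0_self_pos[of "1 - x j"] by (intro mult_left_mono) auto
  also have "\<dots> = (\<Prod>k\<in>S. pow0 (1 - x k) (1 - x k))"
    using fin j by (simp add: prod.remove)
  finally show ?thesis .
qed

text \<open>Part (i) in abstract form: \<open>m \<le> exp (-y)\<close> and \<open>y\<^sup>y \<ge> exp (-1/e)\<close>.\<close>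

lemma max_div_le_exp_inv_e:
  fixes m P :: real
  assumes "0 \<le> m" "m \<le> 1" "Pbound m \<le> P"
  shows "m / P \<le> exp (1 / exp 1)"
proof -
  define y where "y = 1 - m"
  have y: "0 \<le> y" "m = 1 - y" using assms by (auto simp: y_def)
  have "m / P \<le> m / Pbound m"
    using assms Pbound_pos[of m] by (intro divide_left_mono) auto
  also have "\<dots> \<le> exp (- y) / Pbound m"
    using exp_ge_add_one_self[of "- y"] y Pbound_pos[of m] assms by (intro divide_right_mono) auto
  also have "\<dots> = 1 / pow0 y y"
    using pow0_self_pos[OF y(1)] by (simp add: Pbound_def y_def)
  also have "\<dots> \<le> 1 / exp (- 1 / exp 1)"
    using exp_neg_inv_e_le_pow0[OF y(1)] pow0_self_pos[OF y(1)] by (intro divide_left_mono) auto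
  also have "\<dots> = exp (1 / exp 1)"
    by (simp add: exp_minus inverse_eq_divide)
  finally show ?thesis .
qed

text \<open>The threshold below which all arguments of \<open>\<psi>\<^sub>a\<close> in part (ii) lie.\<close>

definition tau :: "real \<Rightarrow> real" where
  "tau m = 68/25 * m / (2 + m\<^sup>2)"

lemma tau_pos: "0 < m \<Longrightarrow> 0 < tau m"
  by (simp add: tau_def add_pos_nonneg)

lemma tau_le_one: "0 \<le> m \<Longrightarrow> tau m \<le> 1"
proof -
  have "0 \<le> (m - 34/25)\<^sup>2" by simp
  then have "68/25 * m \<le> 2 + m\<^sup>2" by (simp add: power2_eq_square algebra_simps)
  then show ?thesis by (simp add: tau_def add_pos_nonneg)
qed

text \<open>From \<open>y ln y \<ge> (y\<^sup>2 - 1)/2\<close>: \<open>Pbound m \<ge> exp (m\<^sup>2/2) / e \<ge> (1 + m\<^sup>2/2) / e\<close>, and \<open>e < 68/25\<close>.\<close>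

lemma Pbound_ge_quadratic:
  fixes m :: real assumes "0 \<le> m" "m \<le> 1"
  shows "(1 + m\<^sup>2/2) / (68/25) \<le> Pbound m"
proof -
  define y where "y = 1 - m"
  have y: "0 \<le> y" "y \<le> 1" using assms by (auto simp: y_def)
  have "exp ((y\<^sup>2 - 1)/2) \<le> pow0 y y"
    using exp_le_pow0_self[of y "(y\<^sup>2 - 1)/2"] xlnx_ge_half_sq[of y] y power_le_one[of y 2]
    by simp
  then have "exp ((y\<^sup>2 - 1)/2) * exp (- y) \<le> Pbound m"
    by (simp add: Pbound_def y_def)
  moreover have "(y\<^sup>2 - 1)/2 + - y = m\<^sup>2/2 - 1"
    by (simp add: y_def power2_eq_square field_simps)
  then have "exp ((y\<^sup>2 - 1)/2) * exp (- y) = exp (m\<^sup>2/2) / exp 1"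
    by (metis exp_add exp_diff)
  moreover have "(1 + m\<^sup>2/2) / exp 1 \<le> exp (m\<^sup>2/2) / exp 1"
    by (intro divide_right_mono) auto
  moreover have "(1 + m\<^sup>2/2) / (68/25) \<le> (1 + m\<^sup>2/2) / exp 1"
    using e_less_272 by (intro divide_left_mono) auto
  ultimately show ?thesis by linarith
qed

lemma m_le_Pbound_tau:
  fixes m :: real assumes "0 \<le> m" "m \<le> 1"
  shows "m \<le> 2 * Pbound m * tau m"
proof -
  have "0 < 2 + m\<^sup>2" by (simp add: add_pos_nonneg)
  then have "m = 2 * ((1 + m\<^sup>2/2) / (68/25)) * tau m"
    by (simp add: tau_def field_simps)
  also have "\<dots> \<le> 2 * Pbound m * tau m"
    using Pbound_ge_quadratic[OF assms] assms by (intro mult_right_mono) (auto simp: tau_def)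
  finally show ?thesis .
qed

text \<open>For \<open>0 \<le> ln a \<le> 1\<close>, \<open>\<psi>\<^sub>a\<close> vanishes at \<open>0\<close> and is convex on \<open>[0,1]\<close> (its second derivative is
  \<open>a\<^sup>t ln a (2 - (1-t) ln a) \<ge> 0\<close>), so it lies below each chord through the origin.\<close>

lemma psi_zero: "a \<noteq> 0 \<Longrightarrow> psi a 0 = 0"
  by (simp add: psi_def)

lemma psi_convex:
  fixes a :: real
  assumes "a > 0" "0 \<le> ln a" "ln a \<le> 1"
  shows "convex_on {0..1} (psi a)"
proof -
  define L where "L = ln a"
  have psi_exp: "psi a = (\<lambda>t. 1 - (1 - t) * exp (t * L))"
    using assms(1) by (auto simp: psi_def powr_def L_def mult.commute)
  have "convex_on {0..1} (\<lambda>t. 1 - (1 - t) * exp (t * L))"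
  proof (rule f''_ge0_imp_convex[where f' = "\<lambda>t. exp (t * L) * (1 - (1 - t) * L)"
        and f'' = "\<lambda>t. exp (t * L) * L * (2 - (1 - t) * L)"])
    show "convex {0..(1::real)}" by simp
    fix t :: real
    show "((\<lambda>t. 1 - (1 - t) * exp (t * L)) has_real_derivative
        exp (t * L) * (1 - (1 - t) * L)) (at t)"
      by (auto intro!: derivative_eq_intros simp: algebra_simps)
    show "((\<lambda>t. exp (t * L) * (1 - (1 - t) * L)) has_real_derivative
        exp (t * L) * L * (2 - (1 - t) * L)) (at t)"
      by (auto intro!: derivative_eq_intros simp: algebra_simps)
    assume "t \<in> {0..1}"
    then have "(1 - t) * L \<le> 1" using assms unfolding L_def by (auto intro: mult_le_one)
    then show "0 \<le> exp (t * L) * L * (2 - (1 - t) * L)" using assms unfolding L_def by auto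
  qed
  then show ?thesis by (simp add: psi_exp)
qed

lemma psi_chord:
  fixes a s t :: real
  assumes "a > 0" "0 \<le> ln a" "ln a \<le> 1" "0 \<le> t" "t \<le> s" "s \<le> 1"
  shows "psi a t \<le> t / s * psi a s"
proof (cases "s = 0")
  case True
  then show ?thesis using assms psi_zero[of a] by simp
next
  case False
  have "psi a ((1 - t/s) *\<^sub>R 0 + (t/s) *\<^sub>R s) \<le> (1 - t/s) * psi a 0 + (t/s) * psi a s"
    using convex_onD[OF psi_convex[OF assms(1-3)], of "t/s" 0 s] assms by auto
  then show ?thesis using assms False psi_zero[of a] by simp
qed

text \<open>A sextic that is nonnegative on \<open>[0,1]\<close>: after the substitutions \<open>s = 2m\<close> and
  \<open>s = 2m - 1\<close> all its Bernstein coefficients on \<open>[0,1]\<close> are positive.\<close>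

lemma certificate_nonneg:
  fixes m :: real assumes "0 \<le> m" "m \<le> 1"
  shows "0 \<le> 16500000 - 47945100*m + 38229436*m^2 - 23972550*m^3 + 43187500*m^4 + 9765625*m^6"
    (is "0 \<le> ?K")
proof (cases "m \<le> 1/2")
  case True
  define s where "s = 2*m"
  have s: "0 \<le> s" "s \<le> 1" using assms True by (auto simp: s_def)
  have "64 * ?K = 1056000000 * (1-s)^6 + 4801756800 * s*(1-s)^5 + 8780454976 * s^2*(1-s)^4
      + 8032471504 * s^3*(1-s)^3 + 3765002656 * s^4*(1-s)^2 + 881626704 * s^5*(1-s) + 124163001 * s^6"
    unfolding s_def by (simp add: algebra_simps eval_nat_numeral)
  also have "\<dots> \<ge> 0" using s by (intro add_nonneg_nonneg mult_nonneg_nonneg zero_le_power) auto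
  finally show ?thesis by simp
next
  case False
  define s where "s = 2*m - 1"
  have s: "0 \<le> s" "s \<le> 1" using assms False by (auto simp: s_def)
  have "64 * ?K = 124163001 * (1-s)^6 + 608329308 * s*(1-s)^5 + 2398515676 * s^2*(1-s)^4
      + 6688561744 * s^3*(1-s)^3 + 10214673616 * s^4*(1-s)^2 + 7719649920 * s^5*(1-s) + 2288954304 * s^6"
    unfolding s_def by (simp add: algebra_simps eval_nat_numeral)
  also have "\<dots> \<ge> 0" using s by (intro add_nonneg_nonneg mult_nonneg_nonneg zero_le_power) auto
  finally show ?thesis by simp
qed

text \<open>The polynomial inequality behind part (ii); clearing the denominator \<open>(2 + m\<^sup>2)\<^sup>3\<close>
  turns it into the certificate above.\<close>

lemma tau_cubic_le:
  fixes m :: real assumes "0 \<le> m" "m \<le> 1"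
  shows "29/50 * tau m + 1659/5000 * (tau m)^2 + 441/5000 * (tau m)^3 \<le> m"
proof -
  define D where "D = 2 + m^2"
  have D: "D > 0" unfolding D_def by (simp add: add_pos_nonneg)
  define Y where "Y = 15406250*D^2 + 23972550*m*D + 17333064*m^2"
  have "Y \<le> 9765625 * D^3"
    using certificate_nonneg[OF assms] unfolding Y_def D_def by (simp add: algebra_simps eval_nat_numeral)
  have "29/50 * tau m + 1659/5000 * (tau m)^2 + 441/5000 * (tau m)^3 = m * Y / (9765625 * D^3)"
    unfolding Y_def tau_def D_def[symmetric] using D by (simp add: field_simps eval_nat_numeral)
  also have "\<dots> \<le> m * (9765625 * D^3) / (9765625 * D^3)"
    using \<open>Y \<le> 9765625 * D^3\<close> assms D by (intro divide_right_mono mult_left_mono) auto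
  also have "\<dots> = m" using D by simp
  finally show ?thesis .
qed

text \<open>\<open>\<psi>\<^sub>a (tau m) \<le> m\<close>, using \<open>a\<^sup>T \<ge> exp (21/50 T) \<ge> 1 + 21/50 T + (21/50 T)\<^sup>2/2\<close>.\<close>

lemma psi_tau_le:
  fixes a m :: real
  assumes a: "a > 0" "21/50 \<le> ln a" and m: "0 \<le> m" "m \<le> 1"
  shows "psi a (tau m) \<le> m"
proof -
  define T where "T = tau m"
  define c :: real where "c = 21/50"
  have T: "0 \<le> T" "T \<le> 1"
    using m tau_le_one[of m] by (auto simp: T_def tau_def)
  have "1 + c*T + (c*T)\<^sup>2/2 \<le> exp (c*T)"
    using T by (intro exp_lower_Taylor_quadratic) (simp add: c_def)
  also have "\<dots> \<le> exp (T * ln a)"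
    using mult_left_mono[OF a(2) T(1)] by (simp add: c_def mult.commute)
  also have "\<dots> = a powr T"
    using a by (simp add: powr_def)
  finally have "(1 - T) * (1 + c*T + (c*T)\<^sup>2/2) \<le> (1 - T) * a powr T"
    using T by (intro mult_left_mono) auto
  then have "psi a T \<le> 1 - (1 - T) * (1 + c*T + (c*T)\<^sup>2/2)"
    by (simp add: psi_def)
  also have "\<dots> = 29/50 * T + 1659/5000 * T^2 + 441/5000 * T^3"
    by (simp add: c_def field_simps eval_nat_numeral)
  also have "\<dots> \<le> m"
    using tau_cubic_le[OF m] by (simp add: T_def)
  finally show ?thesis by (simp add: T_def)
qed

text \<open>Part (ii) in abstract form: chord bound for each term, then \<open>\<Sum> x\<^sub>j = 1\<close> and \<open>m \<le> 2 P tau m\<close>.\<close>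

lemma psi_sum_le_one:
  fixes x :: "'i \<Rightarrow> real" and a m P :: real
  assumes fin: "finite S" and nonneg: "\<forall>j\<in>S. 0 \<le> x j" and stoch: "(\<Sum>j\<in>S. x j) = 1"
    and le_m: "\<forall>j\<in>S. x j \<le> m" and m: "0 < m" "m \<le> 1" and P: "Pbound m \<le> P"
    and a: "a > 0" "21/50 \<le> ln a" "ln a \<le> 1"
  shows "(\<Sum>j\<in>S. psi a (x j / (2 * P))) \<le> 1"
proof -
  define T where "T = tau m"
  have T: "0 < T" "T \<le> 1" using m tau_pos tau_le_one by (auto simp: T_def)
  have ln_a: "0 \<le> ln a" "ln a \<le> 1" using a(2,3) by linarith+
  have P_pos: "0 < P" using Pbound_pos[of m] P m by linarith
  have "m \<le> 2 * Pbound m * T"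
    using m_le_Pbound_tau[of m] m by (simp add: T_def)
  also have "\<dots> \<le> 2 * P * T"
    using P T by (intro mult_right_mono) auto
  finally have m_le: "m \<le> 2 * P * T" .
  have t_le: "x j / (2 * P) \<le> T" if "j \<in> S" for j
    using le_m that m_le P_pos by (simp add: divide_le_eq mult.commute)
      (meson order.trans)
  have "(\<Sum>j\<in>S. psi a (x j / (2 * P))) \<le> (\<Sum>j\<in>S. x j / (2 * P) / T * psi a T)"
    using nonneg t_le P_pos T ln_a by (intro sum_mono psi_chord[OF a(1)]) auto
  also have "\<dots> = (\<Sum>j\<in>S. x j) / (2 * P) / T * psi a T"
    by (simp add: sum_divide_distrib sum_distrib_right)
  also have "\<dots> = psi a T / (2 * P * T)"
    using stoch by simp
  also have "\<dots> \<le> 1"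
    using psi_tau_le[OF a(1,2), of m] m m_le P_pos T by (simp add: T_def)
  finally show ?thesis .
qed

theorem lemma4p3:
  fixes n :: nat and x :: "nat \<Rightarrow> real" and a :: real
  assumes nonneg: "\<forall>j\<in>{1..n}. x j \<ge> 0"
    and stoch: "(\<Sum>j\<in>{1..n}. x j) = 1"
    and a_pos: "a > 0"
    and a_root: "(1 - ln a) / a = 1 / exp 1"
  shows "Max (x ` {1..n}) / Pfun n x \<le> exp (1 / exp 1)
    \<and> (\<Sum>j\<in>{1..n}. psi a (x j / (2 * Pfun n x))) \<le> 1"
proof -
  define S where "S = {1..n}"
  define m where "m = Max (x ` S)"
  have fin: "finite S" and nonneg_S: "\<forall>j\<in>S. 0 \<le> x j" and stoch_S: "(\<Sum>j\<in>S. x j) = 1"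
    using nonneg stoch by (auto simp: S_def)
  have "S \<noteq> {}" using stoch_S by auto
  then have "m \<in> x ` S" using fin by (simp add: m_def)
  then obtain j0 where j0: "j0 \<in> S" "x j0 = m" by auto
  have le_m: "\<forall>j\<in>S. x j \<le> m" using fin by (simp add: m_def)
  have m_pos: "0 < m"
  proof (rule ccontr)
    assume "\<not> 0 < m"
    then have "(\<Sum>j\<in>S. x j) \<le> 0" using le_m by (intro sum_nonpos) force
    then show False using stoch_S by simp
  qed
  have m_le_one: "m \<le> 1" using stochastic_le_one[OF fin nonneg_S stoch_S j0(1)] j0(2) by simp
  have P: "Pbound m \<le> Pfun n x"
    using Pbound_le_prod[OF fin nonneg_S stoch_S j0(1)] j0(2) by (simp add: Pfun_def S_def)
  obtain ln_a: "21/50 \<le> ln a" "ln a < 1" using root_ln_bounds[OF a_pos a_root] by blast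
  show ?thesis
    using max_div_le_exp_inv_e[OF _ m_le_one P] m_pos
      psi_sum_le_one[OF fin nonneg_S stoch_S le_m m_pos m_le_one P a_pos ln_a(1)] ln_a(2)
    by (simp add: m_def S_def)
qed

end
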